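(* For every $l\in\mathbb N$, the real curve $\Gamma_l(\mathbb R)=\{(\lambda,\mu)\in\mathbb R^2:P_l(\lambda,\mu^2)=0\}$ has no ovals in the affine plane $\mathbb R^2_{(\lambda,\mu)}$, and (its projective closure) has no ovals contained in the closure of the half-plane $\{\mu>0\}$ in the projective plane $\mathbb{RP}^2\supset\mathbb R^2_{(\lambda,\mu)}$.
   Context: For $l\in\mathbb N$ and $\mu\in\mathbb C$, $H_l$ is the tridiagonal $l\times l$ matrix with entries $H_{l;jj}=(1-j)(l-j+1)$, $H_{l;j,j+1}=\mu j$, $H_{l;j,j-1}=\mu(l-j+1)$, and $H_{l;ij}=0$ if $|i-j|\geq 2$; $\det(H_l+\lambda\,\mathrm{Id})$ is a polynomial of degree $l$ in $(\lambda,\mu^2)$, written $P_l(\lambda,\mu^2)$. An oval of a real planar projective algebraic curve $\Gamma$ is a subset of $\Gamma$ that is analytically parametrized by a circle, the parametrization being bijective except possibly at singular points of the curve (an oval may contain singular points, and the parametrization may have zero derivative at some of them). *)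

theory Defs
  imports Complex_Main "Jordan_Normal_Form.Determinant"
begin

(* The tridiagonal l x l matrix H_l (paper indices j = 1..l, here i = j - 1 = 0..l-1):
   H_{jj} = (1-j)(l-j+1),  H_{j,j+1} = mu*j,  H_{j,j-1} = mu*(l-j+1). *)
definition H :: "nat \<Rightarrow> real \<Rightarrow> real mat" where
  "H l mu = mat l l (\<lambda>(i, k).
     if k = i then (1 - real (i+1)) * (real l - real (i+1) + 1)
     else if k = i + 1 then mu * real (i+1)
     else if i = k + 1 then mu * (real l - real (i+1) + 1)
     else 0)"

(* Q l lam mu = det (H_l + lam Id) = P_l(lam, mu^2) *)
definition Q :: "nat \<Rightarrow> real \<Rightarrow> real \<Rightarrow> real" where
  "Q l lam mu = det (H l mu + lam \<cdot>\<^sub>m one_mat l)"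

definition Gamma :: "nat \<Rightarrow> (real \<times> real) set" where
  "Gamma l = {(lam, mu). Q l lam mu = 0}"

(* homogenization of Q (total degree l in (lam,mu)): every entry of H_l + lam Id is
   affine-linear in (lam,mu), so the degree-l homogenization is the determinant of the
   matrix with the constant diagonal terms multiplied by z. *)
definition Qh :: "nat \<Rightarrow> real \<Rightarrow> real \<Rightarrow> real \<Rightarrow> real" where
  "Qh l lam mu z = det (mat l l (\<lambda>(i, k).
     if k = i then lam + z * ((1 - real (i+1)) * (real l - real (i+1) + 1))
     else if k = i + 1 then mu * real (i+1)
     else if i = k + 1 then mu * (real l - real (i+1) + 1)
     else 0))"

definition real_analytic :: "(real \<Rightarrow> real) \<Rightarrow> bool" where
  "real_analytic f \<longleftrightarrow> (\<forall>t0. \<exists>r>0. \<exists>a. \<forall>t. \<bar>t - t0\<bar> < r \<longrightarrow>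
      (\<lambda>n. a n * (t - t0) ^ n) sums f t)"

definition sing_aff :: "nat \<Rightarrow> real \<times> real \<Rightarrow> bool" where
  "sing_aff l p \<longleftrightarrow> Q l (fst p) (snd p) = 0
     \<and> ((\<lambda>x. Q l x (snd p)) has_real_derivative 0) (at (fst p))
     \<and> ((\<lambda>y. Q l (fst p) y) has_real_derivative 0) (at (snd p))"

(* an oval of Gamma_l(R) in the affine plane: image of a real-analytic 1-periodic map
   (i.e. a map from the circle R/Z), nonconstant, injective on [0,1) except at points
   mapped to singular points *)
definition is_oval_aff :: "nat \<Rightarrow> (real \<times> real) set \<Rightarrow> bool" where
  "is_oval_aff l S \<longleftrightarrow> (\<exists>\<gamma> :: real \<Rightarrow> real \<times> real.
      real_analytic (\<lambda>t. fst (\<gamma> t)) \<and> real_analytic (\<lambda>t. snd (\<gamma> t))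
    \<and> (\<forall>t. \<gamma> (t + 1) = \<gamma> t)
    \<and> (\<exists>s t. \<gamma> s \<noteq> \<gamma> t)
    \<and> \<gamma> ` UNIV = S
    \<and> S \<subseteq> Gamma l
    \<and> (\<forall>s t. 0 \<le> s \<and> s < 1 \<and> 0 \<le> t \<and> t < 1 \<and> s \<noteq> t \<and> \<gamma> s = \<gamma> t
           \<longrightarrow> sing_aff l (\<gamma> s)))"

(* Real projective plane RP^2 with homogeneous coordinates [lam : mu : z]; the affine plane
   is embedded as (lam,mu) |-> [lam : mu : 1]. *)
definition proj_pt :: "real \<times> real \<times> real \<Rightarrow> (real \<times> real \<times> real) set" where
  "proj_pt v = {(c * fst v, c * fst (snd v), c * snd (snd v)) | c. c \<noteq> 0}"

definition sing_proj :: "nat \<Rightarrow> real \<times> real \<times> real \<Rightarrow> bool" where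
  "sing_proj l v \<longleftrightarrow> (case v of (x, y, z) \<Rightarrow>
       Qh l x y z = 0
     \<and> ((\<lambda>a. Qh l a y z) has_real_derivative 0) (at x)
     \<and> ((\<lambda>b. Qh l x b z) has_real_derivative 0) (at y)
     \<and> ((\<lambda>c. Qh l x y c) has_real_derivative 0) (at z))"

(* v (nonzero) represents a point of the closure in RP^2 of the affine half-plane {mu > 0}:
   it is a limit of representatives of points (lam,mu) with mu > 0 *)
definition in_closure_upper :: "real \<times> real \<times> real \<Rightarrow> bool" where
  "in_closure_upper v \<longleftrightarrow> (\<exists>w :: nat \<Rightarrow> real \<times> real \<times> real.
      (\<forall>n. snd (snd (w n)) \<noteq> 0 \<and> fst (snd (w n)) / snd (snd (w n)) > 0)
    \<and> (\<lambda>n. fst (w n)) \<longlonglongrightarrow> fst v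
    \<and> (\<lambda>n. fst (snd (w n))) \<longlonglongrightarrow> fst (snd v)
    \<and> (\<lambda>n. snd (snd (w n))) \<longlonglongrightarrow> snd (snd v))"

(* an oval of the projective closure of Gamma_l(R): image in RP^2 of a real-analytic map
   from the circle, given by a real-analytic nowhere-zero lift F : R -> R^3 whose projective
   class is 1-periodic; nonconstant, contained in {Qh l = 0}, injective on [0,1) except
   at points mapped to singular points *)
definition is_oval_proj :: "nat \<Rightarrow> (real \<times> real \<times> real) set set \<Rightarrow> bool" where
  "is_oval_proj l S \<longleftrightarrow> (\<exists>F :: real \<Rightarrow> real \<times> real \<times> real.
      real_analytic (\<lambda>t. fst (F t)) \<and> real_analytic (\<lambda>t. fst (snd (F t)))
    \<and> real_analytic (\<lambda>t. snd (snd (F t)))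
    \<and> (\<forall>t. F t \<noteq> (0, 0, 0))
    \<and> (\<forall>t. proj_pt (F (t + 1)) = proj_pt (F t))
    \<and> (\<exists>s t. proj_pt (F s) \<noteq> proj_pt (F t))
    \<and> (\<lambda>t. proj_pt (F t)) ` UNIV = S
    \<and> (\<forall>t. Qh l (fst (F t)) (fst (snd (F t))) (snd (snd (F t))) = 0)
    \<and> (\<forall>s t. 0 \<le> s \<and> s < 1 \<and> 0 \<le> t \<and> t < 1 \<and> s \<noteq> t
           \<and> proj_pt (F s) = proj_pt (F t) \<longrightarrow> sing_proj l (F s)))"

end

theory Submission
  imports "HOL-Analysis.Elementary_Normed_Spaces" "HOL-Library.Periodic_Fun" Defs
begin

(* For mu <> 0 the polynomial P_l(-, mu^2) has only simple roots: the leading principal minors of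
   the tridiagonal matrix H_l + lam Id obey a three-term recurrence whose off-diagonal products
   are positive, so, as for a Sturm sequence, the Wronskian of two consecutive minors is positive.
   Hence the curve is smooth off the line mu = 0 and is locally a graph over the ratio z / mu of
   homogeneous coordinates [lam : mu : z].  On an oval, where mu (affine case) or mu / (mu + z)
   (closed upper half-plane) is extremal, this ratio has a local extremum; a graph over it must
   then pass twice through a point near the extremum, a double point off the line mu = 0, which
   is impossible.  So the oval lies on mu = 0, where the curve consists of finitely many points. *)

lemma cofactor_tridiagonal_subdiagonal:
  fixes f :: "nat \<Rightarrow> nat \<Rightarrow> 'a::comm_ring_1"
  assumes "\<And>i k. i + 1 < k \<Longrightarrow> f i k = 0"
  shows "cofactor (mat (Suc (Suc n)) (Suc (Suc n)) (\<lambda>(i, k). f i k)) (Suc n) n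
     = - (f n (Suc n) * det (mat n n (\<lambda>(i, k). f i k)))"
proof -
  define M where "M = mat_delete (mat (Suc (Suc n)) (Suc (Suc n)) (\<lambda>(i, k). f i k)) (Suc n) n"
  have M: "M \<in> carrier_mat (Suc n) (Suc n)"
    unfolding M_def mat_delete_def by auto
  have "mat_delete M n n = mat n n (\<lambda>(i, k). f i k)"
    by (rule eq_matI) (auto simp: M_def mat_delete_def)
  then have "cofactor M n n = det (mat n n (\<lambda>(i, k). f i k))"
    by (simp add: cofactor_def)
  moreover have "det M = (\<Sum>i<Suc n. M $$ (i, n) * cofactor M i n)"
    by (rule laplace_expansion_column[OF M]) auto
  ultimately have "det M = f n (Suc n) * det (mat n n (\<lambda>(i, k). f i k))"
    using assms by (simp add: M_def mat_delete_def)
  then show ?thesis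
    by (simp add: cofactor_def M_def[symmetric])
qed

lemma det_tridiagonal_recurrence:
  fixes f :: "nat \<Rightarrow> nat \<Rightarrow> 'a::comm_ring_1"
  assumes above: "\<And>i k. i + 1 < k \<Longrightarrow> f i k = 0" and below: "\<And>i k. k + 1 < i \<Longrightarrow> f i k = 0"
  shows "det (mat (Suc (Suc n)) (Suc (Suc n)) (\<lambda>(i, k). f i k))
     = f (Suc n) (Suc n) * det (mat (Suc n) (Suc n) (\<lambda>(i, k). f i k))
       - f (Suc n) n * f n (Suc n) * det (mat n n (\<lambda>(i, k). f i k))"
proof -
  define T where "T m = mat m m (\<lambda>(i, k). f i k)" for m
  have T: "T (Suc (Suc n)) \<in> carrier_mat (Suc (Suc n)) (Suc (Suc n))"
    unfolding T_def by auto
  have "det (T (Suc (Suc n)))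
      = (\<Sum>j<Suc (Suc n). T (Suc (Suc n)) $$ (Suc n, j) * cofactor (T (Suc (Suc n))) (Suc n) j)"
    by (rule laplace_expansion_row[OF T]) auto
  also have "\<dots> = f (Suc n) n * cofactor (T (Suc (Suc n))) (Suc n) n
      + f (Suc n) (Suc n) * cofactor (T (Suc (Suc n))) (Suc n) (Suc n)"
    using below by (simp add: T_def)
  also have "cofactor (T (Suc (Suc n))) (Suc n) (Suc n) = det (T (Suc n))"
  proof -
    have "mat_delete (T (Suc (Suc n))) (Suc n) (Suc n) = T (Suc n)"
      by (rule eq_matI) (auto simp: T_def mat_delete_def)
    then show ?thesis
      by (simp add: cofactor_def)
  qed
  finally show ?thesis
    using cofactor_tridiagonal_subdiagonal[of f n, OF above]
    by (simp add: T_def algebra_simps)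
qed

definition diag_H :: "nat \<Rightarrow> nat \<Rightarrow> real" where
  "diag_H l i = (1 - real (i + 1)) * (real l - real (i + 1) + 1)"

(* offdiag_H l i * mu^2 is the product of the entries (i, i+1) and (i+1, i) of H_l. *)
definition offdiag_H :: "nat \<Rightarrow> nat \<Rightarrow> real" where
  "offdiag_H l i = real (i + 1) * (real l - real (i + 2) + 1)"

definition Hh_entry :: "nat \<Rightarrow> real \<Rightarrow> real \<Rightarrow> real \<Rightarrow> nat \<Rightarrow> nat \<Rightarrow> real" where
  "Hh_entry l a b c i k =
     (if k = i then a + c * diag_H l i
      else if k = i + 1 then b * real (i + 1)
      else if i = k + 1 then b * (real l - real (i + 1) + 1)
      else 0)"

fun minor :: "nat \<Rightarrow> nat \<Rightarrow> real \<Rightarrow> real \<Rightarrow> real \<Rightarrow> real" where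
  "minor l 0 a b c = 1"
| "minor l (Suc 0) a b c = a + c * diag_H l 0"
| "minor l (Suc (Suc n)) a b c =
     (a + c * diag_H l (Suc n)) * minor l (Suc n) a b c - b\<^sup>2 * offdiag_H l n * minor l n a b c"

fun minor_da :: "nat \<Rightarrow> nat \<Rightarrow> real \<Rightarrow> real \<Rightarrow> real \<Rightarrow> real" where
  "minor_da l 0 a b c = 0"
| "minor_da l (Suc 0) a b c = 1"
| "minor_da l (Suc (Suc n)) a b c = minor l (Suc n) a b c
     + (a + c * diag_H l (Suc n)) * minor_da l (Suc n) a b c - b\<^sup>2 * offdiag_H l n * minor_da l n a b c"

lemma det_Hh_entry: "det (mat n n (\<lambda>(i, k). Hh_entry l a b c i k)) = minor l n a b c"
proof (induction l n a b c rule: minor.induct)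
  case (2 l a b c)
  have "mat 1 1 (\<lambda>(i, k). Hh_entry l a b c i k) = mat 1 1 (\<lambda>_. a + c * diag_H l 0)"
    by (rule eq_matI) (auto simp: Hh_entry_def)
  then show ?case
    by (simp add: det_upper_triangular[of _ 1] upper_triangular_def diag_mat_def)
next
  case (3 l n a b c)
  show ?case
    by (subst det_tridiagonal_recurrence)
      (auto simp: 3 Hh_entry_def offdiag_H_def algebra_simps power2_eq_square)
qed simp

lemma Qh_eq_minor: "Qh l a b c = minor l l a b c"
  unfolding Qh_def det_Hh_entry[symmetric] Hh_entry_def diag_H_def by simp

lemma Q_eq_Qh: "Q l a b = Qh l a b 1"
proof -
  have "H l b + a \<cdot>\<^sub>m 1\<^sub>m l = mat l l (\<lambda>(i, k). Hh_entry l a b 1 i k)"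
    by (rule eq_matI) (auto simp: H_def Hh_entry_def diag_H_def)
  then show ?thesis
    unfolding Q_def Qh_eq_minor by (simp add: det_Hh_entry)
qed

lemma Qh_homogeneous: "Qh l (k * a) (k * b) (k * c) = k ^ l * Qh l a b c"
proof -
  have "minor l n (k * a) (k * b) (k * c) = k ^ n * minor l n a b c" for n
    by (induction l n a b c rule: minor.induct) (auto simp: algebra_simps power2_eq_square)
  then show ?thesis
    by (simp add: Qh_eq_minor)
qed

lemma Qh_uminus_mu: "Qh l a (- b) c = Qh l a b c"
proof -
  have "minor l n a (- b) c = minor l n a b c" for n
    by (induction l n a b c rule: minor.induct) auto
  then show ?thesis
    by (simp add: Qh_eq_minor)
qed

lemma Qh_mu_zero: "Qh l a 0 c = (\<Prod>i<l. a + c * diag_H l i)"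
proof -
  have "minor l n a 0 c = (\<Prod>i<n. a + c * diag_H l i)" for n
    by (induction l n a "0::real" c rule: minor.induct) (auto simp: lessThan_Suc algebra_simps)
  then show ?thesis
    by (simp add: Qh_eq_minor)
qed

lemma Qh_mu_z_zero: "Qh l a 0 0 = a ^ l"
  by (simp add: Qh_mu_zero)

lemma has_real_derivative_minor:
  "((\<lambda>a. minor l n a b c) has_real_derivative minor_da l n a b c) (at a)"
  by (induction l n a b c rule: minor.induct) (auto intro!: derivative_eq_intros)

(* minor.induct also quantifies over a and c, which are bound here: x and y are placeholders. *)
lemma isCont_minor_da: "isCont (\<lambda>(a, c). minor_da l n a b c) p"
proof -
  have "isCont (\<lambda>(a, c). minor l n a b c) p" for n
    by (induction l n "x::real" b "y::real" rule: minor.induct)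
      (auto simp: case_prod_unfold intro!: continuous_intros)
  then show ?thesis
    by (induction l n "x::real" b "y::real" rule: minor.induct)
      (auto simp: case_prod_unfold intro!: continuous_intros)
qed

(* Sturm-type argument: each step adds the square of a minor to a positive multiple of the
   previous Wronskian. *)
lemma minor_wronskian_pos:
  assumes "b \<noteq> 0" "Suc n \<le> l"
  shows "0 < minor_da l (Suc n) a b c * minor l n a b c - minor l (Suc n) a b c * minor_da l n a b c"
  using assms(2)
proof (induction n)
  case (Suc n)
  have "0 < b\<^sup>2 * offdiag_H l n"
    using Suc.prems assms(1) by (simp add: offdiag_H_def)
  moreover have "minor_da l (Suc (Suc n)) a b c * minor l (Suc n) a b c
      - minor l (Suc (Suc n)) a b c * minor_da l (Suc n) a b c
    = (minor l (Suc n) a b c)\<^sup>2 + b\<^sup>2 * offdiag_H l n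
      * (minor_da l (Suc n) a b c * minor l n a b c - minor l (Suc n) a b c * minor_da l n a b c)"
    by (simp add: algebra_simps power2_eq_square)
  ultimately show ?case
    using Suc by (simp add: add_nonneg_pos)
qed simp

lemma minor_simple_root:
  assumes "b \<noteq> 0" "minor l l a b c = 0"
  shows "minor_da l l a b c \<noteq> 0"
proof (cases l)
  case (Suc n)
  then show ?thesis
    using minor_wronskian_pos[of b n l a c] assms by auto
qed (use assms in simp)

lemma sing_aff_on_axis:
  assumes "sing_aff l p"
  shows "snd p = 0"
proof (rule ccontr)
  assume "snd p \<noteq> 0"
  have "((\<lambda>a. minor l l a (snd p) 1) has_real_derivative 0) (at (fst p))"
    using assms by (simp add: sing_aff_def Q_eq_Qh Qh_eq_minor)
  then have "minor_da l l (fst p) (snd p) 1 = 0"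
    using DERIV_unique has_real_derivative_minor by blast
  with \<open>snd p \<noteq> 0\<close> show False
    using assms minor_simple_root by (force simp: sing_aff_def Q_eq_Qh Qh_eq_minor)
qed

lemma sing_proj_on_axis:
  assumes "sing_proj l (x, y, z)"
  shows "y = 0"
proof (rule ccontr)
  assume "y \<noteq> 0"
  have "((\<lambda>a. minor l l a y z) has_real_derivative 0) (at x)"
    using assms by (simp add: sing_proj_def Qh_eq_minor)
  then have "minor_da l l x y z = 0"
    using DERIV_unique has_real_derivative_minor by blast
  with \<open>y \<noteq> 0\<close> show False
    using assms minor_simple_root by (force simp: sing_proj_def Qh_eq_minor)
qed

lemma real_analytic_isCont:
  assumes "real_analytic f"
  shows "isCont f t0"
proof -
  obtain r a where "r > 0" and series: "\<And>t. \<bar>t - t0\<bar> < r \<Longrightarrow> (\<lambda>n. a n * (t - t0) ^ n) sums f t"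
    using assms unfolding real_analytic_def by blast
  define g where "g x = (\<Sum>n. a n * x ^ n)" for x :: real
  have "summable (\<lambda>n. a n * (r / 2) ^ n)"
    using series[of "t0 + r / 2"] \<open>r > 0\<close> by (auto simp: sums_iff)
  then have "isCont g 0"
    unfolding g_def by (rule isCont_powser) (use \<open>r > 0\<close> in auto)
  then have "isCont (\<lambda>t. g (t - t0)) t0"
    by (auto intro!: continuous_intros isCont_o2[where f = "\<lambda>t. t - t0" and g = g])
  moreover have "\<forall>\<^sub>F t in nhds t0. f t = g (t - t0)"
    unfolding eventually_nhds_metric dist_real_def
    using \<open>r > 0\<close> series by (intro exI[of _ r]) (auto simp: g_def sums_iff)
  ultimately show ?thesis
    by (simp add: isCont_cong)
qed

lemma local_min_not_injective:
  fixes B :: "real \<Rightarrow> real"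
  assumes "\<forall>\<^sub>F t in nhds t0. isCont B t \<and> B t0 \<le> B t \<and> P t"
  shows "\<exists>s t. s \<noteq> t \<and> B s = B t \<and> P s \<and> P t"
proof -
  obtain d where "d > 0" and near: "\<And>t. \<bar>t - t0\<bar> < d \<Longrightarrow> isCont B t \<and> B t0 \<le> B t \<and> P t"
    using assms unfolding eventually_nhds_metric dist_real_def by blast
  define h where "h = d / 2"
  have "0 < h"
    using \<open>d > 0\<close> by (simp add: h_def)
  have near_h: "isCont B t \<and> B t0 \<le> B t \<and> P t" if "t \<in> {t0 - h..t0 + h}" for t
    using that \<open>d > 0\<close> near[of t] by (auto simp: h_def abs_le_iff)
  then have cont: "continuous_on {a..b} B" if "t0 - h \<le> a" "b \<le> t0 + h" for a b
    using that by (intro continuous_at_imp_continuous_on) auto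
  have "\<exists>s\<in>{t0 - h..t0 + h}. \<exists>t\<in>{t0 - h..t0 + h}. s \<noteq> t \<and> B s = B t"
  proof (cases "B (t0 - h) \<le> B (t0 + h)")
    case True
    moreover have "B t0 \<le> B (t0 - h)"
      using near_h \<open>0 < h\<close> by simp
    ultimately obtain t where "t0 \<le> t" "t \<le> t0 + h" "B t = B (t0 - h)"
      using IVT'[of B t0 "B (t0 - h)" "t0 + h"] cont[of t0 "t0 + h"] \<open>0 < h\<close> by auto
    then show ?thesis
      using \<open>0 < h\<close> by (intro bexI[of _ "t0 - h"] bexI[of _ t]) auto
  next
    case False
    moreover have "B t0 \<le> B (t0 + h)"
      using near_h \<open>0 < h\<close> by simp
    ultimately obtain s where "t0 - h \<le> s" "s \<le> t0" "B s = B (t0 + h)"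
      using IVT2'[of B t0 "B (t0 + h)" "t0 - h"] cont[of "t0 - h" t0] \<open>0 < h\<close> by auto
    then show ?thesis
      using \<open>0 < h\<close> by (intro bexI[of _ s] bexI[of _ "t0 + h"]) auto
  qed
  then show ?thesis
    using near_h by blast
qed

lemma root_locally_unique:
  fixes G D :: "real \<Rightarrow> real \<Rightarrow> real"
  assumes deriv: "\<And>a b. ((\<lambda>a. G a b) has_real_derivative D a b) (at a)"
    and cont: "isCont (\<lambda>(a, b). D a b) (a0, b0)" and "D a0 b0 \<noteq> 0"
  shows "\<exists>\<delta>>0. \<forall>a1 a2 b. \<bar>a1 - a0\<bar> < \<delta> \<longrightarrow> \<bar>a2 - a0\<bar> < \<delta> \<longrightarrow> \<bar>b - b0\<bar> < \<delta>
           \<longrightarrow> G a1 b = 0 \<longrightarrow> G a2 b = 0 \<longrightarrow> a1 = a2"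
proof -
  have "\<exists>e>0. \<forall>p. dist (a0, b0) p < e \<longrightarrow> (\<lambda>(a, b). D a b) p \<noteq> 0"
    by (rule continuous_at_avoid[OF cont]) (simp add: \<open>D a0 b0 \<noteq> 0\<close>)
  then obtain e where "e > 0" and e: "\<And>p. dist (a0, b0) p < e \<Longrightarrow> (\<lambda>(a, b). D a b) p \<noteq> 0"
    by blast
  have D_nonzero: "D a b \<noteq> 0" if "\<bar>a - a0\<bar> < e / 2" "\<bar>b - b0\<bar> < e / 2" for a b
  proof -
    have "dist (a0, b0) (a, b) \<le> \<bar>a0 - a\<bar> + \<bar>b0 - b\<bar>"
      using sqrt_sum_squares_le_sum_abs[of "\<bar>a0 - a\<bar>" "\<bar>b0 - b\<bar>"]
      by (simp add: dist_Pair_Pair dist_real_def)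
    also have "\<dots> < e"
      using that by (simp add: abs_minus_commute)
    finally show ?thesis
      using e[of "(a, b)"] by simp
  qed
  have no_two_roots: False
    if "x < y" and near: "\<bar>x - a0\<bar> < e / 2" "\<bar>y - a0\<bar> < e / 2" "\<bar>b - b0\<bar> < e / 2"
      and roots: "G x b = 0" "G y b = 0" for x y b
  proof -
    have "continuous_on {x..y} (\<lambda>a. G a b)"
      using deriv by (meson DERIV_isCont continuous_at_imp_continuous_on)
    then obtain z where "x < z" "z < y" "((\<lambda>a. G a b) has_real_derivative 0) (at z)"
      using Rolle[of x y "\<lambda>a. G a b"] \<open>x < y\<close> roots deriv real_differentiable_def by auto
    then have "D z b = 0"
      using DERIV_unique deriv by blast
    moreover have "\<bar>z - a0\<bar> < e / 2"
      using near \<open>x < z\<close> \<open>z < y\<close> unfolding abs_less_iff by linarith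
    ultimately show False
      using D_nonzero near(3) by blast
  qed
  show ?thesis
  proof (intro exI[of _ "e / 2"] conjI allI impI)
    fix a1 a2 b
    assume "\<bar>a1 - a0\<bar> < e / 2" "\<bar>a2 - a0\<bar> < e / 2" "\<bar>b - b0\<bar> < e / 2" "G a1 b = 0" "G a2 b = 0"
    then show "a1 = a2"
      using no_two_roots[of a1 a2 b] no_two_roots[of a2 a1 b] by (cases a1 a2 rule: linorder_cases) auto
  qed (use \<open>e > 0\<close> in simp)
qed

lemma implicit_curve_not_injective_at_local_min:
  fixes A B :: "real \<Rightarrow> real" and G D :: "real \<Rightarrow> real \<Rightarrow> real"
  assumes deriv: "\<And>a b. ((\<lambda>a. G a b) has_real_derivative D a b) (at a)"
    and cont_D: "isCont (\<lambda>(a, b). D a b) (A t0, B t0)" and "D (A t0) (B t0) \<noteq> 0"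
    and "0 < \<eta>"
    and cont: "\<And>t. \<bar>t - t0\<bar> < \<eta> \<Longrightarrow> isCont A t \<and> isCont B t"
    and curve: "\<And>t. \<bar>t - t0\<bar> < \<eta> \<Longrightarrow> G (A t) (B t) = 0"
    and min: "\<And>t. \<bar>t - t0\<bar> < \<eta> \<Longrightarrow> B t0 \<le> B t"
  shows "\<exists>s t. s \<noteq> t \<and> \<bar>s - t0\<bar> < \<eta> \<and> \<bar>t - t0\<bar> < \<eta> \<and> A s = A t \<and> B s = B t"
proof -
  obtain \<delta> where "\<delta> > 0" and unique: "\<And>a1 a2 b. \<bar>a1 - A t0\<bar> < \<delta> \<Longrightarrow> \<bar>a2 - A t0\<bar> < \<delta>
      \<Longrightarrow> \<bar>b - B t0\<bar> < \<delta> \<Longrightarrow> G a1 b = 0 \<Longrightarrow> G a2 b = 0 \<Longrightarrow> a1 = a2"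
    using root_locally_unique[OF deriv cont_D \<open>D (A t0) (B t0) \<noteq> 0\<close>] by blast
  define near where "near t \<longleftrightarrow> \<bar>t - t0\<bar> < \<eta> \<and> \<bar>A t - A t0\<bar> < \<delta> \<and> \<bar>B t - B t0\<bar> < \<delta>" for t
  have "\<forall>\<^sub>F t in nhds t0. dist t t0 < \<eta>"
    unfolding eventually_nhds_metric using \<open>0 < \<eta>\<close> by blast
  moreover have "\<forall>\<^sub>F t in nhds t0. dist (A t) (A t0) < \<delta>" "\<forall>\<^sub>F t in nhds t0. dist (B t) (B t0) < \<delta>"
    using cont[of t0] \<open>0 < \<eta>\<close> \<open>\<delta> > 0\<close>
    by (auto simp: isCont_def tendsto_at_iff_tendsto_nhds intro: tendstoD)
  ultimately have "\<forall>\<^sub>F t in nhds t0. isCont B t \<and> B t0 \<le> B t \<and> near t"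
    by eventually_elim (simp add: near_def dist_real_def cont min)
  then obtain s t where "s \<noteq> t" "B s = B t" "near s" "near t"
    using local_min_not_injective by blast
  moreover from this have "A s = A t"
    using unique[of "A s" "A t" "B s"] curve[of s] curve[of t] by (simp add: near_def)
  ultimately show ?thesis
    unfolding near_def by blast
qed

lemma periodic_double_point:
  fixes g :: "real \<Rightarrow> 'a"
  assumes "\<And>t. g (t + 1) = g t" "\<And>t. P (t + 1) = P t"
    and base: "\<And>s t. s \<in> {0..<1} \<Longrightarrow> t \<in> {0..<1} \<Longrightarrow> s \<noteq> t \<Longrightarrow> g s = g t \<Longrightarrow> P s"
    and "s \<noteq> t" "\<bar>s - t\<bar> < 1" "g s = g t"
  shows "P s"
proof -
  interpret g: periodic_fun_simple' g by unfold_locales (rule assms(1))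
  interpret P: periodic_fun_simple' P by unfold_locales (rule assms(2))
  have g_frac: "g (frac x) = g x" and P_frac: "P (frac x) = P x" for x
    using g.minus_of_int[of x "\<lfloor>x\<rfloor>"] P.minus_of_int[of x "\<lfloor>x\<rfloor>"] by (simp_all add: frac_def)
  have "frac s \<noteq> frac t"
  proof
    assume "frac s = frac t"
    then have "s - t = of_int (\<lfloor>s\<rfloor> - \<lfloor>t\<rfloor>)"
      by (simp add: frac_def)
    moreover from this \<open>\<bar>s - t\<bar> < 1\<close> have "\<bar>\<lfloor>s\<rfloor> - \<lfloor>t\<rfloor>\<bar> < 1"
      by (metis of_int_abs of_int_less_1_iff)
    ultimately show False
      using \<open>s \<noteq> t\<close> by simp
  qed
  then have "P (frac s)"
    using base[of "frac s" "frac t"] \<open>g s = g t\<close> by (simp add: g_frac frac_lt_1)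
  then show ?thesis
    by (simp add: P_frac)
qed

lemma periodic_attains_max:
  fixes g :: "real \<Rightarrow> real"
  assumes "\<And>t. g (t + 1) = g t" "\<And>t. isCont g t"
  shows "\<exists>t0. \<forall>t. g t \<le> g t0"
proof -
  interpret periodic_fun_simple' g by unfold_locales (rule assms(1))
  have "continuous_on {0..1} g"
    using assms(2) by (simp add: continuous_at_imp_continuous_on)
  then obtain t0 where t0: "\<forall>t\<in>{0..1}. g t \<le> g t0"
    using continuous_attains_sup[of "{0..1::real}" g] by auto
  have "g t \<le> g t0" for t
  proof -
    have "g t = g (frac t)"
      using minus_of_int[of t "\<lfloor>t\<rfloor>"] by (simp add: frac_def)
    also have "\<dots> \<le> g t0"
      using t0 frac_ge_0[of t] frac_lt_1[of t] by simp
    finally show ?thesis .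
  qed
  then show ?thesis
    by blast
qed

lemma proj_pt_conv_scaleR: "proj_pt v = {c *\<^sub>R v | c. c \<noteq> 0}"
  by (cases v) (simp add: proj_pt_def)

lemma mem_proj_pt_self: "v \<in> proj_pt v"
  unfolding proj_pt_conv_scaleR by (auto intro: exI[of _ 1])

lemma proj_pt_eq_iff: "proj_pt v = proj_pt w \<longleftrightarrow> (\<exists>c. c \<noteq> 0 \<and> v = c *\<^sub>R w)"
proof
  assume "proj_pt v = proj_pt w"
  then show "\<exists>c. c \<noteq> 0 \<and> v = c *\<^sub>R w"
    using mem_proj_pt_self[of v] unfolding proj_pt_conv_scaleR by blast
next
  assume "\<exists>c. c \<noteq> 0 \<and> v = c *\<^sub>R w"
  then obtain c where "c \<noteq> 0" and v: "v = c *\<^sub>R w"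
    by blast
  show "proj_pt v = proj_pt w"
  proof (intro equalityI subsetI)
    fix x
    assume "x \<in> proj_pt v"
    then obtain d where "d \<noteq> 0" "x = (d * c) *\<^sub>R w"
      unfolding proj_pt_conv_scaleR v by auto
    then show "x \<in> proj_pt w"
      using \<open>c \<noteq> 0\<close> unfolding proj_pt_conv_scaleR by auto
  next
    fix x
    assume "x \<in> proj_pt w"
    then obtain d where "d \<noteq> 0" "x = (d / c) *\<^sub>R v"
      using \<open>c \<noteq> 0\<close> unfolding proj_pt_conv_scaleR v by auto
    then show "x \<in> proj_pt v"
      using \<open>c \<noteq> 0\<close> unfolding proj_pt_conv_scaleR by auto
  qed
qed

lemma proj_pt_affine_eq_iff: "proj_pt (a, b, 1) = proj_pt (a', b', 1) \<longleftrightarrow> a = a' \<and> b = b'"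
proof
  assume "proj_pt (a, b, 1) = proj_pt (a', b', 1)"
  then obtain c where "(a, b, 1) = c *\<^sub>R (a', b', 1 :: real)"
    unfolding proj_pt_eq_iff by blast
  then show "a = a' \<and> b = b'"
    by simp
qed simp

lemma one_divide_antimono_same_sign:
  fixes x y :: real
  assumes "0 < x * y" "x \<le> y"
  shows "1 / y \<le> 1 / x"
  using assms by (metis le_imp_inverse_le le_imp_inverse_le_neg inverse_eq_divide zero_less_mult_iff)

(* In the chart mu = 1 with coordinates a = lam / mu, b = z / mu the curve is Qh l a 1 b = 0, and
   every root in a is simple. *)
lemma curve_lift_not_injective_at_ratio_min:
  fixes X Y Z :: "real \<Rightarrow> real"
  assumes cont: "\<And>t. isCont X t" "\<And>t. isCont Y t" "\<And>t. isCont Z t"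
    and curve: "\<And>t. Qh l (X t) (Y t) (Z t) = 0"
    and "0 < \<eta>" and near: "\<And>t. \<bar>t - t0\<bar> < \<eta> \<Longrightarrow> Y t \<noteq> 0 \<and> Z t0 / Y t0 \<le> Z t / Y t"
  shows "\<exists>s t. s \<noteq> t \<and> \<bar>s - t0\<bar> < \<eta> \<and> \<bar>t - t0\<bar> < \<eta>
    \<and> proj_pt (X s, Y s, Z s) = proj_pt (X t, Y t, Z t)"
proof -
  define A B where "A t = X t / Y t" and "B t = Z t / Y t" for t
  have chart: "minor l l (A t) 1 (B t) = 0" if "Y t \<noteq> 0" for t
  proof -
    have "Qh l (X t) (Y t) (Z t) = Y t ^ l * Qh l (A t) 1 (B t)"
      using Qh_homogeneous[of l "Y t" "A t" 1 "B t"] that by (simp add: A_def B_def)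
    then show ?thesis
      using curve[of t] that by (simp add: Qh_eq_minor)
  qed
  have "\<exists>s t. s \<noteq> t \<and> \<bar>s - t0\<bar> < \<eta> \<and> \<bar>t - t0\<bar> < \<eta> \<and> A s = A t \<and> B s = B t"
  proof (rule implicit_curve_not_injective_at_local_min[OF _ _ _ \<open>0 < \<eta>\<close>])
    show "((\<lambda>a. minor l l a 1 b) has_real_derivative minor_da l l a 1 b) (at a)" for a b
      by (rule has_real_derivative_minor)
    show "isCont (\<lambda>(a, b). minor_da l l a 1 b) (A t0, B t0)"
      by (rule isCont_minor_da)
    show "minor_da l l (A t0) 1 (B t0) \<noteq> 0"
      using minor_simple_root chart near[of t0] \<open>0 < \<eta>\<close> by simp
    fix t
    assume "\<bar>t - t0\<bar> < \<eta>"
    with near have "Y t \<noteq> 0" "B t0 \<le> B t"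
      by (simp_all add: B_def)
    then show "isCont A t \<and> isCont B t" "minor l l (A t) 1 (B t) = 0" "B t0 \<le> B t"
      using cont chart unfolding A_def[abs_def] B_def[abs_def] by (auto intro!: continuous_intros)
  qed
  then obtain s t where st: "s \<noteq> t" "\<bar>s - t0\<bar> < \<eta>" "\<bar>t - t0\<bar> < \<eta>" "A s = A t" "B s = B t"
    by blast
  then have "Y s \<noteq> 0" "Y t \<noteq> 0"
    using near by blast+
  with st have "(X s, Y s, Z s) = (Y s / Y t) *\<^sub>R (X t, Y t, Z t)"
    by (auto simp: A_def B_def field_simps)
  with \<open>Y s \<noteq> 0\<close> \<open>Y t \<noteq> 0\<close> have "proj_pt (X s, Y s, Z s) = proj_pt (X t, Y t, Z t)"
    unfolding proj_pt_eq_iff by (intro exI[of _ "Y s / Y t"]) simp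
  with st show ?thesis
    by blast
qed

lemma curve_lift_ratio_min_on_axis:
  fixes X Y Z :: "real \<Rightarrow> real"
  assumes cont: "\<And>t. isCont X t" "\<And>t. isCont Y t" "\<And>t. isCont Z t"
    and curve: "\<And>t. Qh l (X t) (Y t) (Z t) = 0"
    and double: "\<And>s t. s \<noteq> t \<Longrightarrow> \<bar>s - t\<bar> < 1
      \<Longrightarrow> proj_pt (X s, Y s, Z s) = proj_pt (X t, Y t, Z t) \<Longrightarrow> Y s = 0"
    and min: "\<And>t. 0 < Y t * Y t0 \<Longrightarrow> Z t0 / Y t0 \<le> Z t / Y t"
  shows "Y t0 = 0"
proof (rule ccontr)
  assume "Y t0 \<noteq> 0"
  have "((\<lambda>t. Y t * Y t0) \<longlongrightarrow> Y t0 * Y t0) (nhds t0)"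
    using cont(2)[of t0] by (auto simp: isCont_def tendsto_at_iff_tendsto_nhds intro: tendsto_intros)
  then have "\<forall>\<^sub>F t in nhds t0. 0 < Y t * Y t0"
    by (rule order_tendstoD(1)) (use \<open>Y t0 \<noteq> 0\<close> not_real_square_gt_zero in blast)
  then obtain \<eta>0 where "0 < \<eta>0" and same_sign0: "\<And>t. \<bar>t - t0\<bar> < \<eta>0 \<Longrightarrow> 0 < Y t * Y t0"
    unfolding eventually_nhds_metric dist_real_def by blast
  define \<eta> where "\<eta> = min \<eta>0 (1 / 2)"
  have "0 < \<eta>" "\<eta> \<le> 1 / 2" and same_sign: "\<And>t. \<bar>t - t0\<bar> < \<eta> \<Longrightarrow> 0 < Y t * Y t0"
    using \<open>0 < \<eta>0\<close> same_sign0 by (auto simp: \<eta>_def)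
  have "Y t \<noteq> 0 \<and> Z t0 / Y t0 \<le> Z t / Y t" if "\<bar>t - t0\<bar> < \<eta>" for t
    using same_sign[OF that] min by auto
  then obtain s t where "s \<noteq> t" "\<bar>s - t0\<bar> < \<eta>" "\<bar>t - t0\<bar> < \<eta>"
    and "proj_pt (X s, Y s, Z s) = proj_pt (X t, Y t, Z t)"
    using curve_lift_not_injective_at_ratio_min[OF cont curve \<open>0 < \<eta>\<close>] by blast
  moreover from this have "\<bar>s - t\<bar> < 1"
    using \<open>\<eta> \<le> 1 / 2\<close> unfolding abs_less_iff by linarith
  ultimately have "Y s = 0"
    using double by blast
  then show False
    using same_sign[OF \<open>\<bar>s - t0\<bar> < \<eta>\<close>] by simp
qed

lemma curve_lift_on_axis_constant:
  fixes X Z :: "real \<Rightarrow> real"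
  assumes cont: "\<And>t. isCont X t" "\<And>t. isCont Z t"
    and curve: "\<And>t. Qh l (X t) 0 (Z t) = 0" and nonzero: "\<And>t. (X t, Z t) \<noteq> (0, 0)"
  shows "proj_pt (X s, 0, Z s) = proj_pt (X t, 0, Z t)"
proof -
  have Z_nonzero: "Z t \<noteq> 0" for t
    using curve[of t] nonzero[of t] by (auto simp: Qh_mu_z_zero)
  have "X t / Z t \<in> (\<lambda>i. - diag_H l i) ` {..<l}" for t
  proof -
    have "Qh l (X t) 0 (Z t) = Z t ^ l * Qh l (X t / Z t) 0 1"
      using Qh_homogeneous[of l "Z t" "X t / Z t" 0 1] Z_nonzero by simp
    then have "(\<Prod>i<l. X t / Z t + diag_H l i) = 0"
      using curve[of t] Z_nonzero by (simp add: Qh_mu_zero)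
    then show ?thesis
      by (force simp: eq_neg_iff_add_eq_0)
  qed
  then have "finite (range (\<lambda>t. X t / Z t))"
    by (auto intro: finite_subset[of _ "(\<lambda>i. - diag_H l i) ` {..<l}"])
  moreover have "continuous_on UNIV (\<lambda>t. X t / Z t)"
    using cont Z_nonzero by (auto intro!: continuous_at_imp_continuous_on continuous_intros)
  ultimately have "(\<lambda>t. X t / Z t) constant_on UNIV"
    by (intro continuous_finite_range_constant) auto
  then have "(X s, 0, Z s) = (Z s / Z t) *\<^sub>R (X t, 0, Z t)"
    using Z_nonzero by (auto simp: constant_on_def field_simps)
  moreover have "Z s / Z t \<noteq> 0"
    using Z_nonzero by simp
  ultimately show ?thesis
    unfolding proj_pt_eq_iff by blast
qed

lemma closed_affine_lift_on_axis:
  fixes L M :: "real \<Rightarrow> real"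
  assumes cont: "\<And>t. isCont L t" "\<And>t. isCont M t"
    and curve: "\<And>t. Qh l (L t) (M t) 1 = 0"
    and periodic: "\<And>t. M (t + 1) = M t"
    and double: "\<And>s t. s \<noteq> t \<Longrightarrow> \<bar>s - t\<bar> < 1 \<Longrightarrow> L s = L t \<Longrightarrow> M s = M t \<Longrightarrow> M s = 0"
  shows "M t = 0"
proof -
  have max_on_axis: "N t0 = 0"
    if N: "N = M \<or> N = (\<lambda>t. - M t)" and max: "\<And>t. N t \<le> N t0" for N t0
  proof (rule curve_lift_ratio_min_on_axis[where X = L and Y = N and Z = "\<lambda>_. 1"])
    show "isCont N t" for t
      using N cont by (auto intro: continuous_intros)
    show "Qh l (L t) (N t) 1 = 0" for t
      using N curve by (auto simp: Qh_uminus_mu)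
    show "N s = 0" if "s \<noteq> t" "\<bar>s - t\<bar> < 1" "proj_pt (L s, N s, 1) = proj_pt (L t, N t, 1)" for s t
      using N double[OF that(1,2)] that(3) by (auto simp: proj_pt_affine_eq_iff)
    show "1 / N t0 \<le> 1 / N t" if "0 < N t * N t0" for t
      using one_divide_antimono_same_sign[OF that max] .
  qed (use cont in auto)
  obtain t_max where t_max: "\<And>t. M t \<le> M t_max"
    using periodic_attains_max[OF periodic cont(2)] by blast
  obtain t_min where t_min: "\<And>t. - M t \<le> - M t_min"
    using periodic_attains_max[of "\<lambda>t. - M t"] periodic cont(2) by (auto intro: continuous_intros)
  have "M t_max = 0" "- M t_min = 0"
    using max_on_axis[of M t_max] max_on_axis[of "\<lambda>t. - M t" t_min] t_max t_min by simp_all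
  then show ?thesis
    using t_max[of t] t_min[of t] by linarith
qed


lemma in_closure_upper_sign:
  assumes "in_closure_upper v"
  shows "0 \<le> fst (snd v) * snd (snd v)"
proof -
  obtain w :: "nat \<Rightarrow> real \<times> real \<times> real" where
    w: "\<And>n. snd (snd (w n)) \<noteq> 0 \<and> fst (snd (w n)) / snd (snd (w n)) > 0"
    and lim: "(\<lambda>n. fst (snd (w n))) \<longlonglongrightarrow> fst (snd v)" "(\<lambda>n. snd (snd (w n))) \<longlonglongrightarrow> snd (snd v)"
    using assms unfolding in_closure_upper_def by blast
  have "(\<lambda>n. fst (snd (w n)) * snd (snd (w n))) \<longlonglongrightarrow> fst (snd v) * snd (snd v)"
    using lim by (rule tendsto_mult)
  moreover have "0 \<le> fst (snd (w n)) * snd (snd (w n))" for n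
    using w[of n] by (auto simp: zero_less_divide_iff zero_le_mult_iff)
  ultimately show ?thesis
    by (intro LIMSEQ_le_const) auto
qed

lemma curve_upper_point_sum_nonzero:
  assumes "Qh l x y z = 0" "(x, y, z) \<noteq> 0" "0 \<le> y * z"
  shows "y + z \<noteq> 0"
proof
  assume "y + z = 0"
  with \<open>0 \<le> y * z\<close> have "y = 0" "z = 0"
    by (auto simp: zero_le_mult_iff)
  with assms(1,2) show False
    by (simp add: Qh_mu_z_zero zero_prod_def)
qed

(* rho = Y / (Y + Z) is defined on the projective points of the closed upper half-plane, and a
   maximum of rho is a minimum of z / mu. *)
lemma closed_upper_lift_on_axis:
  fixes X Y Z :: "real \<Rightarrow> real"
  assumes cont: "\<And>t. isCont X t" "\<And>t. isCont Y t" "\<And>t. isCont Z t"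
    and curve: "\<And>t. Qh l (X t) (Y t) (Z t) = 0"
    and nonzero: "\<And>t. (X t, Y t, Z t) \<noteq> 0"
    and upper: "\<And>t. 0 \<le> Y t * Z t"
    and periodic: "\<And>t. \<exists>c. c \<noteq> 0 \<and> (X (t + 1), Y (t + 1), Z (t + 1)) = c *\<^sub>R (X t, Y t, Z t)"
    and double: "\<And>s t. s \<noteq> t \<Longrightarrow> \<bar>s - t\<bar> < 1
      \<Longrightarrow> proj_pt (X s, Y s, Z s) = proj_pt (X t, Y t, Z t) \<Longrightarrow> Y s = 0"
  shows "Y t = 0"
proof -
  have denom: "Y t + Z t \<noteq> 0" for t
    using curve nonzero upper by (rule curve_upper_point_sum_nonzero)
  define \<rho> where "\<rho> t = Y t / (Y t + Z t)" for t
  have \<rho>_nonneg: "0 \<le> \<rho> t" for t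
    using upper[of t] denom[of t] by (auto simp: \<rho>_def zero_le_divide_iff zero_le_mult_iff)
  have "\<rho> (t + 1) = \<rho> t" for t
  proof -
    obtain c where "c \<noteq> 0" "Y (t + 1) = c * Y t" "Z (t + 1) = c * Z t"
      using periodic[of t] by auto
    then show ?thesis
      by (simp add: \<rho>_def distrib_left[symmetric])
  qed
  moreover have "isCont \<rho> t" for t
    unfolding \<rho>_def[abs_def] using cont denom by (auto intro!: continuous_intros)
  ultimately obtain t0 where t0: "\<And>t. \<rho> t \<le> \<rho> t0"
    using periodic_attains_max by blast
  have ratio: "\<rho> t = 1 / (1 + Z t / Y t)" "0 \<le> Z t / Y t" if "Y t \<noteq> 0" for t
    using that denom[of t] upper[of t] by (auto simp: \<rho>_def field_simps zero_le_divide_iff zero_le_mult_iff)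
  have "Y t0 = 0"
  proof (rule curve_lift_ratio_min_on_axis[OF cont curve double])
    fix t
    assume "0 < Y t * Y t0"
    then have "Y t \<noteq> 0" "Y t0 \<noteq> 0"
      by auto
    then have "1 / (1 + Z t / Y t) \<le> 1 / (1 + Z t0 / Y t0)" "0 \<le> Z t / Y t" "0 \<le> Z t0 / Y t0"
      using t0[of t] ratio by simp_all
    then show "Z t0 / Y t0 \<le> Z t / Y t"
      by (simp add: frac_le_eq field_simps)
  qed
  then have "\<rho> t = 0"
    using t0[of t] \<rho>_nonneg[of t] by (simp add: \<rho>_def)
  then show ?thesis
    using denom[of t] by (simp add: \<rho>_def)
qed

lemma sing_aff_double_point_on_axis:
  fixes \<gamma> :: "real \<Rightarrow> real \<times> real"
  assumes periodic: "\<forall>t. \<gamma> (t + 1) = \<gamma> t"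
    and simple: "\<forall>s t. 0 \<le> s \<and> s < 1 \<and> 0 \<le> t \<and> t < 1 \<and> s \<noteq> t \<and> \<gamma> s = \<gamma> t
      \<longrightarrow> sing_aff l (\<gamma> s)"
    and "s \<noteq> t" "\<bar>s - t\<bar> < 1" "\<gamma> s = \<gamma> t"
  shows "snd (\<gamma> s) = 0"
proof (rule periodic_double_point[of \<gamma> "\<lambda>s. snd (\<gamma> s) = 0"])
  show "snd (\<gamma> u) = 0" if "u \<in> {0..<1}" "v \<in> {0..<1}" "u \<noteq> v" "\<gamma> u = \<gamma> v" for u v
  proof -
    have "sing_aff l (\<gamma> u)"
      using simple that by auto
    then show ?thesis
      by (rule sing_aff_on_axis)
  qed
qed (use assms in auto)

lemma sing_proj_double_point_on_axis:
  fixes F :: "real \<Rightarrow> real \<times> real \<times> real"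
  assumes periodic: "\<forall>t. proj_pt (F (t + 1)) = proj_pt (F t)"
    and simple: "\<forall>s t. 0 \<le> s \<and> s < 1 \<and> 0 \<le> t \<and> t < 1 \<and> s \<noteq> t
      \<and> proj_pt (F s) = proj_pt (F t) \<longrightarrow> sing_proj l (F s)"
    and "s \<noteq> t" "\<bar>s - t\<bar> < 1" "proj_pt (F s) = proj_pt (F t)"
  shows "fst (snd (F s)) = 0"
proof (rule periodic_double_point[of "\<lambda>t. proj_pt (F t)" "\<lambda>s. fst (snd (F s)) = 0"])
  show "fst (snd (F (u + 1))) = 0 \<longleftrightarrow> fst (snd (F u)) = 0" for u
  proof -
    obtain c where "c \<noteq> 0" "F (u + 1) = c *\<^sub>R F u"
      using periodic unfolding proj_pt_eq_iff by blast
    then show ?thesis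
      by simp
  qed
  show "fst (snd (F u)) = 0"
    if "u \<in> {0..<1}" "v \<in> {0..<1}" "u \<noteq> v" "proj_pt (F u) = proj_pt (F v)" for u v
  proof -
    have "sing_proj l (fst (F u), fst (snd (F u)), snd (snd (F u)))"
      using simple that by auto
    then show ?thesis
      by (rule sing_proj_on_axis)
  qed
qed (use assms in auto)

lemma no_affine_oval: "\<not> is_oval_aff l S"
proof
  assume "is_oval_aff l S"
  then obtain \<gamma> :: "real \<Rightarrow> real \<times> real" and s0 t0 where
    analytic: "real_analytic (\<lambda>t. fst (\<gamma> t))" "real_analytic (\<lambda>t. snd (\<gamma> t))"
    and periodic: "\<forall>t. \<gamma> (t + 1) = \<gamma> t" and nonconstant: "\<gamma> s0 \<noteq> \<gamma> t0"
    and image: "\<gamma> ` UNIV = S" and on_curve: "S \<subseteq> Gamma l"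
    and simple: "\<forall>s t. 0 \<le> s \<and> s < 1 \<and> 0 \<le> t \<and> t < 1 \<and> s \<noteq> t \<and> \<gamma> s = \<gamma> t
      \<longrightarrow> sing_aff l (\<gamma> s)"
    unfolding is_oval_aff_def by (elim exE conjE) (rule that)
  define L M where "L t = fst (\<gamma> t)" and "M t = snd (\<gamma> t)" for t
  have cont: "isCont L t" "isCont M t" for t
    using analytic unfolding L_def[abs_def] M_def[abs_def] by (simp_all add: real_analytic_isCont)
  have curve: "Qh l (L t) (M t) 1 = 0" for t
    using image on_curve by (auto simp: Gamma_def Q_eq_Qh L_def M_def case_prod_unfold)
  have double: "M s = 0" if "s \<noteq> t" "\<bar>s - t\<bar> < 1" "L s = L t" "M s = M t" for s t
    using sing_aff_double_point_on_axis[OF periodic simple that(1,2)] that(3,4)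
    by (simp add: L_def M_def prod_eq_iff)
  have M_zero: "M t = 0" for t
  proof (rule closed_affine_lift_on_axis[OF cont curve])
    show "M (u + 1) = M u" for u
      by (simp add: M_def periodic)
  qed (rule double)
  have "proj_pt (L s, 0, 1) = proj_pt (L t, 0, 1)" for s t
    by (rule curve_lift_on_axis_constant[where l = l]) (use cont curve M_zero in auto)
  then have "\<gamma> s = \<gamma> t" for s t
    using M_zero by (simp add: proj_pt_affine_eq_iff L_def M_def prod_eq_iff)
  with nonconstant show False
    by blast
qed

lemma no_upper_projective_oval:
  assumes "is_oval_proj l S" and upper: "\<forall>p\<in>S. \<forall>v\<in>p. in_closure_upper v"
  shows False
proof -
  obtain F :: "real \<Rightarrow> real \<times> real \<times> real" and s0 t0 where
    analytic: "real_analytic (\<lambda>t. fst (F t))" "real_analytic (\<lambda>t. fst (snd (F t)))"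
      "real_analytic (\<lambda>t. snd (snd (F t)))"
    and nonzero: "\<forall>t. F t \<noteq> (0, 0, 0)"
    and periodic: "\<forall>t. proj_pt (F (t + 1)) = proj_pt (F t)"
    and nonconstant: "proj_pt (F s0) \<noteq> proj_pt (F t0)"
    and image: "(\<lambda>t. proj_pt (F t)) ` UNIV = S"
    and curve: "\<forall>t. Qh l (fst (F t)) (fst (snd (F t))) (snd (snd (F t))) = 0"
    and simple: "\<forall>s t. 0 \<le> s \<and> s < 1 \<and> 0 \<le> t \<and> t < 1 \<and> s \<noteq> t
      \<and> proj_pt (F s) = proj_pt (F t) \<longrightarrow> sing_proj l (F s)"
    using assms(1) unfolding is_oval_proj_def by (elim exE conjE) (rule that)
  define X Y Z where "X t = fst (F t)" and "Y t = fst (snd (F t))" and "Z t = snd (snd (F t))" for t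
  have F: "F t = (X t, Y t, Z t)" for t
    by (simp add: X_def Y_def Z_def)
  have cont: "isCont X t" "isCont Y t" "isCont Z t" for t
    using analytic unfolding X_def[abs_def] Y_def[abs_def] Z_def[abs_def]
    by (simp_all add: real_analytic_isCont)
  have curve: "Qh l (X t) (Y t) (Z t) = 0" for t
    using curve by (simp add: X_def Y_def Z_def)
  have scale: "\<exists>c. c \<noteq> 0 \<and> (X (t + 1), Y (t + 1), Z (t + 1)) = c *\<^sub>R (X t, Y t, Z t)" for t
    using periodic by (simp add: proj_pt_eq_iff flip: F)
  have double: "Y s = 0"
    if "s \<noteq> t" "\<bar>s - t\<bar> < 1" "proj_pt (X s, Y s, Z s) = proj_pt (X t, Y t, Z t)" for s t
    using sing_proj_double_point_on_axis[OF periodic simple that(1,2)] that(3) by (simp add: F)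
  have "Y t = 0" for t
  proof (rule closed_upper_lift_on_axis[OF cont curve _ _ scale double])
    show "(X t, Y t, Z t) \<noteq> 0" for t
      using nonzero by (simp add: zero_prod_def flip: F)
    show "0 \<le> Y t * Z t" for t
    proof -
      have "in_closure_upper (F t)"
        using upper image mem_proj_pt_self[of "F t"] by blast
      then show ?thesis
        using in_closure_upper_sign[of "F t"] by (simp add: F)
    qed
  qed
  then have "proj_pt (F s) = proj_pt (F t)" for s t
    using curve_lift_on_axis_constant[of X Z l s t] cont curve nonzero by (simp add: F)
  with nonconstant show False
    by blast
qed

theorem theorem1p8:
  fixes l :: nat
  shows "\<not> (\<exists>S. is_oval_aff l S)
       \<and> \<not> (\<exists>S. is_oval_proj l S \<and> (\<forall>p\<in>S. \<forall>v\<in>p. in_closure_upper v))"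
  using no_affine_oval no_upper_projective_oval by blast

end
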